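(* Let $\phi$ be a posterior family for a model $\pi$ with data space $Y$ and parameter space $\Theta$, and let $f$ be a test quantity. (1) For any fixed $y\in Y$: if, as the number of sample draws $M\to\infty$, we have for all $i\in\{0,\dots,M\}$ that $Q_{\phi,f}(i\mid y)\to\frac{i+1}{M+1}$, then $q_{\phi,f}(x\mid y)=x$ for all $x\in[0,1]$. (2) If, as $M\to\infty$, we have for all $i\in\{0,\dots,M\}$ that $\int_Y Q_{\phi,f}(i\mid y)\pi_{\text{marg}}(y)\,\mathrm{d}y\to\frac{i+1}{M+1}$, then $\phi$ passes continuous SBC with respect to $f$.
   Context: Model $\pi$: prior density $\pi_{\text{prior}}(\theta)$ on $\Theta$, observation density $\pi_{\text{obs}}(y\mid\theta)$ on $Y$, $\pi_{\text{marg}}(y)=\int_\Theta\pi_{\text{obs}}(y\mid\theta)\pi_{\text{prior}}(\theta)\,\mathrm{d}\theta$, $\pi_{\text{post}}(\theta\mid y)=\pi_{\text{obs}}(y\mid\theta)\pi_{\text{prior}}(\theta)/\pi_{\text{marg}}(y)$. A posterior family is $\phi:\Theta\times Y\to\mathbb{R}^+$ with $\int_\Theta\phi(\theta\mid y)\,\mathrm{d}\theta=1$ for all $y$; a test quantity is a measurable $f:\Theta\times Y\to\mathbb{R}$. Sample quantities: for $M\in\mathbb{N}$, $\theta_1,\dots,\theta_M$ i.i.d. from $\phi(\cdot\mid y)$, $N^{\mathtt{less}}=\sum_m\mathbb{I}[f(\theta_m,y)<f(\tilde\theta,y)]$, $N^{\mathtt{equals}}=\sum_m\mathbb{I}[f(\theta_m,y)=f(\tilde\theta,y)]$,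 $K$ uniform on $\{0,\dots,N^{\mathtt{equals}}\}$, $N^{\mathtt{total}}=N^{\mathtt{less}}+K$; $R_{\phi,f}(i\mid\tilde\theta,y)=\Pr(N^{\mathtt{total}}\le i)$; $Q_{\phi,f}(i\mid y)=\int_\Theta\pi_{\text{post}}(\tilde\theta\mid y)R_{\phi,f}(i\mid\tilde\theta,y)\,\mathrm{d}\tilde\theta$. Continuous quantities: $C_{\phi,f}(s\mid y)=\int_\Theta\mathbb{I}[f(\theta,y)\le s]\phi(\theta\mid y)\,\mathrm{d}\theta$, $D_{\phi,f}(s\mid y)=\int_\Theta\mathbb{I}[f(\theta,y)=s]\phi(\theta\mid y)\,\mathrm{d}\theta$; with $U\sim\mathrm{uniform}[0,1]$, $r_{\phi,f}(x\mid\tilde\theta,y)=\Pr\big(C_{\phi,f}(f(\tilde\theta,y)\mid y)-U\,D_{\phi,f}(f(\tilde\theta,y)\mid y)\le x\big)$ and $q_{\phi,f}(x\mid y)=\int_\Theta\pi_{\text{post}}(\tilde\theta\mid y)r_{\phi,f}(x\mid\tilde\theta,y)\,\mathrm{d}\tilde\theta$ for $x\in[0,1]$. $\phi$ passes continuous SBC w.r.t. $f$ if $\int_Y q_{\phi,f}(x\mid y)\pi_{\text{marg}}(y)\,\mathrm{d}y=x$ for all $x\in[0,1]$. *)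

theory Defs
  imports "HOL-Probability.Probability"
begin

text \<open>Model: parameter space \<Theta> = 'a, data space Y = 'b (Euclidean spaces with
 Lebesgue measure). Conventions: obs y \<theta> = pi_obs(y | \<theta>), phi \<theta> y = phi(\<theta> | y),
 f \<theta> y = f(\<theta>, y).\<close>

definition marg :: "('a::euclidean_space \<Rightarrow> real) \<Rightarrow> ('b \<Rightarrow> 'a \<Rightarrow> real) \<Rightarrow> 'b \<Rightarrow> real" where
  "marg prior obs y = (\<integral>\<theta>. obs y \<theta> * prior \<theta> \<partial>lborel)"

definition post :: "('a::euclidean_space \<Rightarrow> real) \<Rightarrow> ('b \<Rightarrow> 'a \<Rightarrow> real) \<Rightarrow> 'a \<Rightarrow> 'b \<Rightarrow> real" where
  "post prior obs \<theta> y = obs y \<theta> * prior \<theta> / marg prior obs y"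

definition samples :: "('a::euclidean_space \<Rightarrow> 'b \<Rightarrow> real) \<Rightarrow> nat \<Rightarrow> 'b \<Rightarrow> (nat \<Rightarrow> 'a) measure" where
  "samples phi M y = PiM {..<M} (\<lambda>_. density lborel (\<lambda>\<theta>. ennreal (phi \<theta> y)))"

definition N_less :: "('a \<Rightarrow> 'b \<Rightarrow> real) \<Rightarrow> nat \<Rightarrow> 'a \<Rightarrow> 'b \<Rightarrow> (nat \<Rightarrow> 'a) \<Rightarrow> nat" where
  "N_less f M \<theta>t y \<theta>s = card {m \<in> {..<M}. f (\<theta>s m) y < f \<theta>t y}"

definition N_equals :: "('a \<Rightarrow> 'b \<Rightarrow> real) \<Rightarrow> nat \<Rightarrow> 'a \<Rightarrow> 'b \<Rightarrow> (nat \<Rightarrow> 'a) \<Rightarrow> nat" where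
  "N_equals f M \<theta>t y \<theta>s = card {m \<in> {..<M}. f (\<theta>s m) y = f \<theta>t y}"

definition R_rank :: "('a::euclidean_space \<Rightarrow> 'b \<Rightarrow> real) \<Rightarrow> ('a \<Rightarrow> 'b \<Rightarrow> real) \<Rightarrow> nat \<Rightarrow> nat \<Rightarrow> 'a \<Rightarrow> 'b \<Rightarrow> real" where
  "R_rank phi f M i \<theta>t y =
     (\<integral>\<theta>s. measure_pmf.prob (pmf_of_set {0..N_equals f M \<theta>t y \<theta>s})
                 {k. N_less f M \<theta>t y \<theta>s + k \<le> i} \<partial>samples phi M y)"

definition Q_rank :: "('a::euclidean_space \<Rightarrow> real) \<Rightarrow> ('b \<Rightarrow> 'a \<Rightarrow> real) \<Rightarrow> ('a \<Rightarrow> 'b \<Rightarrow> real)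
     \<Rightarrow> ('a \<Rightarrow> 'b \<Rightarrow> real) \<Rightarrow> nat \<Rightarrow> nat \<Rightarrow> 'b \<Rightarrow> real" where
  "Q_rank prior obs phi f M i y = (\<integral>\<theta>t. post prior obs \<theta>t y * R_rank phi f M i \<theta>t y \<partial>lborel)"

definition C_cdf :: "('a::euclidean_space \<Rightarrow> 'b \<Rightarrow> real) \<Rightarrow> ('a \<Rightarrow> 'b \<Rightarrow> real) \<Rightarrow> real \<Rightarrow> 'b \<Rightarrow> real" where
  "C_cdf phi f s y = (\<integral>\<theta>. indicator {\<theta>. f \<theta> y \<le> s} \<theta> * phi \<theta> y \<partial>lborel)"

definition D_atom :: "('a::euclidean_space \<Rightarrow> 'b \<Rightarrow> real) \<Rightarrow> ('a \<Rightarrow> 'b \<Rightarrow> real) \<Rightarrow> real \<Rightarrow> 'b \<Rightarrow> real" where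
  "D_atom phi f s y = (\<integral>\<theta>. indicator {\<theta>. f \<theta> y = s} \<theta> * phi \<theta> y \<partial>lborel)"

definition r_cont :: "('a::euclidean_space \<Rightarrow> 'b \<Rightarrow> real) \<Rightarrow> ('a \<Rightarrow> 'b \<Rightarrow> real) \<Rightarrow> real \<Rightarrow> 'a \<Rightarrow> 'b \<Rightarrow> real" where
  "r_cont phi f x \<theta>t y =
     measure (uniform_measure lborel {0..1})
       {u. C_cdf phi f (f \<theta>t y) y - u * D_atom phi f (f \<theta>t y) y \<le> x}"

definition q_cont :: "('a::euclidean_space \<Rightarrow> real) \<Rightarrow> ('b \<Rightarrow> 'a \<Rightarrow> real) \<Rightarrow> ('a \<Rightarrow> 'b \<Rightarrow> real)
     \<Rightarrow> ('a \<Rightarrow> 'b \<Rightarrow> real) \<Rightarrow> real \<Rightarrow> 'b \<Rightarrow> real" where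
  "q_cont prior obs phi f x y = (\<integral>\<theta>t. post prior obs \<theta>t y * r_cont phi f x \<theta>t y \<partial>lborel)"

definition passes_continuous_SBC :: "('a::euclidean_space \<Rightarrow> real) \<Rightarrow> ('b::euclidean_space \<Rightarrow> 'a \<Rightarrow> real)
     \<Rightarrow> ('a \<Rightarrow> 'b \<Rightarrow> real) \<Rightarrow> ('a \<Rightarrow> 'b \<Rightarrow> real) \<Rightarrow> bool" where
  "passes_continuous_SBC prior obs phi f \<longleftrightarrow>
     (\<forall>x\<in>{0..1}. (\<integral>y. q_cont prior obs phi f x y * marg prior obs y \<partial>lborel) = x)"

end

(*
  Given the M draws, the discrete rank N_less + K has distribution function
  max 0 (min 1 ((i + 1 - N_less) / (N_equals + 1))) at i, whereas r is the
  distribution function of a + (1 - U) d, where a and d are the probabilities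
  under phi(. | y) that f is below, resp. equal to, f(theta_t, y).  The
  frequencies N_less/M and N_equals/M have mean-square error at most 1/M, so
  by Chebyshev they are eta-close to a and d outside an event of probability
  2/(M eta^2), and off that event the two distribution functions agree up to a
  shift of the argument by O(eta).  Averaging over the posterior (and then over
  the marginal) gives
    q((i+1)/M - 4 eta) - 2/(M eta^2) <= Q(i) <= q((i+1)/M + 2 eta) + 2/(M eta^2).
  If Q(i) is uniformly close to (i+1)/(M+1), the monotone function q is thereby
  squeezed into [x - 5 eta, x + 7 eta] at every x, for every eta > 0.
*)

theory Submission
  imports Defs
begin

section \<open>Rank distribution functions\<close>

definition discrete_rank_cdf :: "nat \<Rightarrow> nat \<Rightarrow> nat \<Rightarrow> real" where
  "discrete_rank_cdf S E i = max 0 (min 1 ((real i + 1 - real S) / (real E + 1)))"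

definition continuous_rank_cdf :: "real \<Rightarrow> real \<Rightarrow> real \<Rightarrow> real" where
  "continuous_rank_cdf c d x = measure (uniform_measure lborel {0..1}) {u. c - u * d \<le> x}"

lemma prob_pmf_of_set_rank_le:
  "measure_pmf.prob (pmf_of_set {0..E}) {k. S + k \<le> i} = discrete_rank_cdf S E i"
proof (cases "S \<le> i")
  case False
  then have "{0..E} \<inter> {k. S + k \<le> i} = {}" by auto
  then show ?thesis
    using False by (simp add: measure_pmf_of_set discrete_rank_cdf_def divide_nonpos_pos del: atLeastAtMost_iff)
next
  case True
  then have "{0..E} \<inter> {k. S + k \<le> i} = {0..min E (i - S)}" by auto
  then have "measure_pmf.prob (pmf_of_set {0..E}) {k. S + k \<le> i} = real (min E (i - S) + 1) / (real E + 1)"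
    by (simp add: measure_pmf_of_set del: atLeastAtMost_iff)
  also have "\<dots> = discrete_rank_cdf S E i"
    using True by (cases "E \<le> i - S") (auto simp: discrete_rank_cdf_def of_nat_diff)
  finally show ?thesis .
qed

lemma discrete_rank_cdf_bounds: "0 \<le> discrete_rank_cdf S E i" "discrete_rank_cdf S E i \<le> 1"
  by (simp_all add: discrete_rank_cdf_def)

lemma measure_uniform_01:
  "A \<in> sets lborel \<Longrightarrow> measure (uniform_measure lborel {0..1::real}) A = measure lborel ({0..1} \<inter> A)"
  by (subst measure_uniform_measure) auto

lemma prob_space_uniform_01: "prob_space (uniform_measure lborel {0..1::real})"
  by (rule prob_space_uniform_measure) auto

lemma continuous_rank_cdf_bounds: "0 \<le> continuous_rank_cdf c d x" "continuous_rank_cdf c d x \<le> 1"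
  unfolding continuous_rank_cdf_def
  by (rule measure_nonneg, rule prob_space.prob_le_1[OF prob_space_uniform_01])

lemma continuous_rank_cdf_mono:
  assumes "x \<le> x'"
  shows "continuous_rank_cdf c d x \<le> continuous_rank_cdf c d x'"
proof -
  interpret prob_space "uniform_measure lborel {0..1::real}"
    by (rule prob_space_uniform_01)
  show ?thesis
    unfolding continuous_rank_cdf_def using assms by (intro finite_measure_mono) auto
qed

lemma le_continuous_rank_cdf:
  assumes "0 \<le> d" "w \<in> {0..1}" "c - (1 - w) * d \<le> x"
  shows "w \<le> continuous_rank_cdf c d x"
proof -
  have "{1 - w..1} \<subseteq> {0..1} \<inter> {u. c - u * d \<le> x}"
  proof
    fix u assume u: "u \<in> {1 - w..1}"
    then have "(1 - w) * d \<le> u * d" using assms by (intro mult_right_mono) auto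
    then show "u \<in> {0..1} \<inter> {u. c - u * d \<le> x}" using u assms by auto
  qed
  then have "measure lborel {1 - w..1} \<le> measure lborel ({0..1} \<inter> {u. c - u * d \<le> x})"
    by (intro measure_mono_fmeasurable fmeasurable_Int_fmeasurable) (auto simp: fmeasurable_def)
  then show ?thesis using assms by (simp add: continuous_rank_cdf_def measure_uniform_01)
qed

lemma continuous_rank_cdf_le:
  assumes "0 \<le> d" "p \<in> {0..1}" and below: "\<And>w. w \<in> {0..1} \<Longrightarrow> c - (1 - w) * d \<le> x \<Longrightarrow> w \<le> p"
  shows "continuous_rank_cdf c d x \<le> p"
proof -
  have "{0..1} \<inter> {u. c - u * d \<le> x} \<subseteq> {1 - p..1}"
    using below[of "1 - _"] by force
  then have "measure lborel ({0..1} \<inter> {u. c - u * d \<le> x}) \<le> measure lborel {1 - p..1}"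
    using assms by (intro measure_mono_fmeasurable) (auto simp: fmeasurable_def emeasure_lborel_Icc_eq)
  then show ?thesis using assms by (simp add: continuous_rank_cdf_def measure_uniform_01)
qed

lemma discrete_rank_cdf_le_continuous:
  fixes S E M i :: nat
  assumes M: "0 < M" and "0 \<le> d"
    and S_close: "\<bar>real S / M - a\<bar> \<le> \<eta>" and E_close: "\<bar>real E / M - d\<bar> \<le> \<eta>"
  shows "discrete_rank_cdf S E i \<le> continuous_rank_cdf (a + d) d (real (i + 1) / M + 2 * \<eta>)"
proof (cases "discrete_rank_cdf S E i = 0")
  case True
  then show ?thesis using continuous_rank_cdf_bounds(1) by simp
next
  case False
  define p where "p = discrete_rank_cdf S E i"
  have p: "p \<in> {0..1}" unfolding p_def using discrete_rank_cdf_bounds by auto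
  have "p \<le> (real i + 1 - real S) / (real E + 1)"
    using False unfolding p_def discrete_rank_cdf_def by linarith
  then have "p * (real E + 1) \<le> real i + 1 - real S"
    by (simp add: pos_le_divide_eq)
  then have "p * (real E + 1) / M \<le> (real i + 1 - real S) / M"
    using M by (intro divide_right_mono) auto
  then have scaled: "p * (real E / M + 1 / M) \<le> real (i + 1) / M - real S / M"
    by (simp add: add_divide_distrib diff_divide_distrib distrib_left)
  have "p * d \<le> p * (real E / M + \<eta>)"
    using p E_close by (intro mult_left_mono) auto
  also have "\<dots> \<le> p * (real E / M) + \<eta>"
    using p E_close by (simp add: distrib_left mult_left_le_one_le)
  finally have "p * d \<le> p * (real E / M) + \<eta>" .
  moreover have "0 \<le> p / M"
    using p by simp
  ultimately have "a + p * d \<le> real (i + 1) / M + 2 * \<eta>"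
    using scaled S_close by (simp add: distrib_left abs_le_iff)
  then show ?thesis
    unfolding p_def[symmetric] using p assms by (intro le_continuous_rank_cdf) (auto simp: algebra_simps)
qed

lemma continuous_rank_cdf_le_discrete:
  fixes S E M i :: nat
  assumes M: "0 < M" and "0 \<le> d" and \<eta>: "0 < \<eta>" "1 / M \<le> \<eta>"
    and S_close: "\<bar>real S / M - a\<bar> \<le> \<eta>" and E_close: "\<bar>real E / M - d\<bar> \<le> \<eta>"
  shows "continuous_rank_cdf (a + d) d (real (i + 1) / M - 4 * \<eta>) \<le> discrete_rank_cdf S E i"
proof (rule continuous_rank_cdf_le)
  fix w assume w: "w \<in> {0..1}" "a + d - (1 - w) * d \<le> real (i + 1) / M - 4 * \<eta>"
  have "w * (real E / M) \<le> w * (d + \<eta>)"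
    using w E_close by (intro mult_left_mono) auto
  also have "\<dots> \<le> w * d + \<eta>"
    using w \<eta> by (auto simp: algebra_simps intro: mult_left_le_one_le)
  finally have "w * (real E / M) \<le> w * d + \<eta>" .
  moreover have "w / M \<le> 1 / M"
    using w M by (intro divide_right_mono) auto
  ultimately have "w * (real E / M + 1 / M) < real (i + 1) / M - real S / M"
    using w S_close \<eta> by (auto simp: algebra_simps)
  then have "w * (real E + 1) / M < (real i + 1 - real S) / M"
    by (simp add: add_divide_distrib diff_divide_distrib distrib_left)
  then have "w * (real E + 1) < real i + 1 - real S"
    using M by (simp add: divide_less_cancel)
  then have "w < (real i + 1 - real S) / (real E + 1)"
    by (simp add: pos_less_divide_eq)
  then show "w \<le> discrete_rank_cdf S E i"
    using w unfolding discrete_rank_cdf_def by (simp add: le_max_iff_disj)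
qed (use assms discrete_rank_cdf_bounds in auto)

lemma discrete_rank_cdf_approx:
  fixes S E M i :: nat and a d \<eta> :: real
  assumes M: "0 < M" and d: "0 \<le> d" and \<eta>: "0 < \<eta>" "1 / M \<le> \<eta>"
  defines "dev \<equiv> ((real S / M - a)\<^sup>2 + (real E / M - d)\<^sup>2) / \<eta>\<^sup>2"
  shows "discrete_rank_cdf S E i \<le> continuous_rank_cdf (a + d) d (real (i + 1) / M + 2 * \<eta>) + dev"
    and "continuous_rank_cdf (a + d) d (real (i + 1) / M - 4 * \<eta>) - dev \<le> discrete_rank_cdf S E i"
proof -
  have "0 \<le> dev"
    unfolding dev_def by simp
  moreover have "1 \<le> dev" if far: "\<not> (\<bar>real S / M - a\<bar> \<le> \<eta> \<and> \<bar>real E / M - d\<bar> \<le> \<eta>)"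
  proof -
    have "\<eta>\<^sup>2 \<le> (real S / M - a)\<^sup>2 \<or> \<eta>\<^sup>2 \<le> (real E / M - d)\<^sup>2"
      using far \<eta> by (auto simp flip: abs_le_square_iff)
    then have "\<eta>\<^sup>2 \<le> (real S / M - a)\<^sup>2 + (real E / M - d)\<^sup>2"
      by (smt (verit) zero_le_power2)
    then show ?thesis
      unfolding dev_def using \<eta> by simp
  qed
  ultimately show "discrete_rank_cdf S E i \<le> continuous_rank_cdf (a + d) d (real (i + 1) / M + 2 * \<eta>) + dev"
    and "continuous_rank_cdf (a + d) d (real (i + 1) / M - 4 * \<eta>) - dev \<le> discrete_rank_cdf S E i"
    using discrete_rank_cdf_le_continuous[OF M d] continuous_rank_cdf_le_discrete[OF M d \<eta>]
      discrete_rank_cdf_bounds continuous_rank_cdf_bounds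
    by (smt (verit))+
qed

section \<open>Squeezing by a uniform rank limit\<close>

lemma rank_sandwich_lower:
  fixes Q :: "nat \<Rightarrow> real" and q :: "real \<Rightarrow> real" and M :: nat and \<eta> \<epsilon> x :: real
  assumes "mono q" "\<And>x. 0 \<le> q x" and \<eta>: "0 < \<eta>" "2 \<le> \<eta> * M" and "\<epsilon> \<le> \<eta>"
    and upper: "\<And>i. i \<le> M \<Longrightarrow> Q i \<le> q (real (i + 1) / M + 2 * \<eta>) + \<epsilon>"
    and approx: "\<And>i. i \<le> M \<Longrightarrow> \<bar>Q i - real (i + 1) / real (M + 1)\<bar> < \<eta>"
    and "x \<le> 1"
  shows "x - 5 * \<eta> \<le> q x"
proof (cases "x \<le> 4 * \<eta>")
  case True
  then show ?thesis using assms(2)[of x] \<eta> by linarith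
next
  case False
  have M: "0 < M" using \<eta> by (cases "M = 0") auto
  define j where "j = nat \<lfloor>(x - 2 * \<eta>) * M\<rfloor>"
  have "2 * \<eta> * M \<le> (x - 2 * \<eta>) * M"
    using False by (intro mult_right_mono) auto
  then have j_ge: "(x - 2 * \<eta>) * M - 1 < j" and j_le: "j \<le> (x - 2 * \<eta>) * M"
    using \<eta> unfolding j_def by linarith+
  have "1 \<le> j"
    using j_ge \<open>2 * \<eta> * M \<le> (x - 2 * \<eta>) * M\<close> \<eta> by linarith
  then obtain i where j: "j = i + 1"
    by (metis add.commute le_add_diff_inverse)
  have "(x - 2 * \<eta>) * M \<le> M"
    using \<open>x \<le> 1\<close> False \<eta> by (intro mult_left_le_one_le) auto
  then have "i \<le> M"
    using j_le j by linarith
  have "real (i + 1) / M \<le> x - 2 * \<eta>"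
    using j_le j M by (simp add: divide_le_eq)
  then have "real (i + 1) / M + 2 * \<eta> \<le> x"
    by simp
  then have "Q i \<le> q x + \<epsilon>"
    using upper[OF \<open>i \<le> M\<close>] monoD[OF \<open>mono q\<close>] by fastforce
  have "(x - 3 * \<eta>) * (M + 1) \<le> real j"
    using j_ge \<eta> \<open>x \<le> 1\<close> False by (simp add: algebra_simps)
  then have "x - 3 * \<eta> \<le> real (i + 1) / real (M + 1)"
    using j by (simp add: le_divide_eq add.commute)
  then show ?thesis
    using approx[OF \<open>i \<le> M\<close>] \<open>Q i \<le> q x + \<epsilon>\<close> \<open>\<epsilon> \<le> \<eta>\<close> by linarith
qed

lemma rank_sandwich_upper:
  fixes Q :: "nat \<Rightarrow> real" and q :: "real \<Rightarrow> real" and M :: nat and \<eta> \<epsilon> x :: real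
  assumes "mono q" "\<And>x. q x \<le> 1" and \<eta>: "0 < \<eta>" "2 \<le> \<eta> * M" and "\<epsilon> \<le> \<eta>"
    and lower: "\<And>i. i \<le> M \<Longrightarrow> 0 < Q i \<Longrightarrow> q (real (i + 1) / M - 4 * \<eta>) - \<epsilon> \<le> Q i"
    and approx: "\<And>i. i \<le> M \<Longrightarrow> \<bar>Q i - real (i + 1) / real (M + 1)\<bar> < \<eta>"
    and "0 \<le> x"
  shows "q x \<le> x + 7 * \<eta>"
proof (cases "1 \<le> x + 4 * \<eta>")
  case True
  then show ?thesis using assms(2)[of x] \<eta> by linarith
next
  case False
  have M: "0 < M" using \<eta> by (cases "M = 0") auto
  define j where "j = nat \<lceil>(x + 4 * \<eta>) * M\<rceil>"
  have "4 * \<eta> * M \<le> (x + 4 * \<eta>) * M"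
    using \<open>0 \<le> x\<close> by (intro mult_right_mono) auto
  then have j_ge: "(x + 4 * \<eta>) * M \<le> j" and j_le: "j < (x + 4 * \<eta>) * M + 1"
    using \<eta> unfolding j_def by linarith+
  have "1 \<le> j"
    using j_ge \<open>4 * \<eta> * M \<le> (x + 4 * \<eta>) * M\<close> \<eta> by linarith
  then obtain i where j: "j = i + 1"
    by (metis add.commute le_add_diff_inverse)
  have "(x + 4 * \<eta>) * M < M"
    using False M by simp
  then have "i \<le> M"
    using j_le j by linarith
  have "x + 4 * \<eta> \<le> real (i + 1) / M"
    using j_ge j M by (simp add: le_divide_eq)
  then have "x \<le> real (i + 1) / M - 4 * \<eta>"
    by simp
  then have q_le: "q x \<le> q (real (i + 1) / M - 4 * \<eta>)"
    using monoD[OF \<open>mono q\<close>] by blast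
  have "\<eta> * 1 \<le> \<eta> * M"
    using M \<eta> by (intro mult_left_mono) auto
  then have "2 * \<eta> * (M + 1) \<le> real j"
    using j_ge \<open>4 * \<eta> * M \<le> (x + 4 * \<eta>) * M\<close> by (simp add: algebra_simps)
  then have "2 * \<eta> \<le> real (i + 1) / real (M + 1)"
    using j by (simp add: le_divide_eq add.commute)
  then have "0 < Q i"
    using approx[OF \<open>i \<le> M\<close>] \<eta> by linarith
  have "real j \<le> (x + 5 * \<eta>) * (M + 1)"
    using j_le \<eta> \<open>0 \<le> x\<close> by (simp add: algebra_simps)
  then have "real (i + 1) / real (M + 1) \<le> x + 5 * \<eta>"
    using j by (simp add: divide_le_eq add.commute)
  then show ?thesis
    using approx[OF \<open>i \<le> M\<close>] lower[OF \<open>i \<le> M\<close> \<open>0 < Q i\<close>] q_le \<open>\<epsilon> \<le> \<eta>\<close> by linarith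
qed

lemma identity_if_uniform_rank_limit:
  fixes Q :: "nat \<Rightarrow> nat \<Rightarrow> real" and q :: "real \<Rightarrow> real"
  assumes "mono q" and "\<And>x. 0 \<le> q x" "\<And>x. q x \<le> 1"
    and upper: "\<And>M i \<eta>. 0 < M \<Longrightarrow> 0 < \<eta> \<Longrightarrow> 1 / M \<le> \<eta> \<Longrightarrow> i \<le> M \<Longrightarrow>
      Q M i \<le> q (real (i + 1) / M + 2 * \<eta>) + 2 / (M * \<eta>\<^sup>2)"
    and lower: "\<And>M i \<eta>. 0 < M \<Longrightarrow> 0 < \<eta> \<Longrightarrow> 1 / M \<le> \<eta> \<Longrightarrow> i \<le> M \<Longrightarrow> 0 < Q M i \<Longrightarrow>
      q (real (i + 1) / M - 4 * \<eta>) - 2 / (M * \<eta>\<^sup>2) \<le> Q M i"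
    and limit: "\<forall>\<epsilon>>0. \<exists>M0. \<forall>M\<ge>M0. \<forall>i\<le>M. \<bar>Q M i - real (i + 1) / real (M + 1)\<bar> < \<epsilon>"
    and x: "x \<in> {0..1}"
  shows "q x = x"
proof -
  have close: "\<bar>q x - x\<bar> \<le> 7 * \<eta>" if \<eta>: "0 < \<eta>" "\<eta> \<le> 1" for \<eta>
  proof -
    obtain M0 where M0: "\<forall>M\<ge>M0. \<forall>i\<le>M. \<bar>Q M i - real (i + 1) / real (M + 1)\<bar> < \<eta>"
      using limit \<eta> by blast
    \<comment> \<open>M \<ge> 2 / \<eta>^3 makes the Chebyshev error 2 / (M \<eta>^2) at most \<eta>.\<close>
    define M where "M = max M0 (nat \<lceil>2 / \<eta> ^ 3\<rceil>) + 1"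
    have "M0 \<le> M" "0 < M"
      unfolding M_def by auto
    have "2 / \<eta> ^ 3 \<le> M"
      unfolding M_def by linarith
    then have M_large: "2 \<le> \<eta> ^ 3 * M"
      using \<eta> by (simp add: divide_le_eq mult.commute)
    have "\<eta> ^ 3 \<le> \<eta> ^ 1"
      using \<eta> by (intro power_decreasing) auto
    then have "\<eta> ^ 3 * M \<le> \<eta> * M"
      by (intro mult_right_mono) auto
    with M_large have "2 \<le> \<eta> * M"
      by linarith
    then have "1 / M \<le> \<eta>"
      using \<open>0 < M\<close> by (simp add: divide_le_eq mult.commute)
    have "2 / (M * \<eta>\<^sup>2) \<le> \<eta>"
      using M_large \<open>0 < M\<close> \<eta> by (simp add: divide_le_eq power3_eq_cube power2_eq_square algebra_simps)
    have approx: "\<And>i. i \<le> M \<Longrightarrow> \<bar>Q M i - real (i + 1) / real (M + 1)\<bar> < \<eta>"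
      using M0 \<open>M0 \<le> M\<close> by blast
    have "x - 5 * \<eta> \<le> q x"
      by (rule rank_sandwich_lower[where Q = "Q M" and \<epsilon> = "2 / (M * \<eta>\<^sup>2)"])
        (use assms(1,2) upper[OF \<open>0 < M\<close> \<eta>(1) \<open>1 / M \<le> \<eta>\<close>] approx x
          \<eta> \<open>2 \<le> \<eta> * M\<close> \<open>2 / (M * \<eta>\<^sup>2) \<le> \<eta>\<close> in auto)
    moreover have "q x \<le> x + 7 * \<eta>"
      by (rule rank_sandwich_upper[where Q = "Q M" and \<epsilon> = "2 / (M * \<eta>\<^sup>2)"])
        (use assms(1,3) lower[OF \<open>0 < M\<close> \<eta>(1) \<open>1 / M \<le> \<eta>\<close>] approx x
          \<eta> \<open>2 \<le> \<eta> * M\<close> \<open>2 / (M * \<eta>\<^sup>2) \<le> \<eta>\<close> in auto)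
    ultimately show ?thesis
      by linarith
  qed
  show ?thesis
  proof (rule ccontr)
    assume "q x \<noteq> x"
    then have "\<bar>q x - x\<bar> \<le> 7 * min 1 (\<bar>q x - x\<bar> / 8)"
      by (intro close) auto
    with \<open>q x \<noteq> x\<close> show False
      by (simp add: min_def split: if_splits)
  qed
qed

section \<open>Mean-square error of sample means\<close>

lemma integral_PiM_centered_product_eq_0:
  fixes g :: "'a \<Rightarrow> real"
  assumes "prob_space \<Phi>" "finite I" "m \<in> I" "m' \<in> I" "m \<noteq> m'" "integrable \<Phi> g"
  shows "(\<integral>\<theta>s. (g (\<theta>s m) - (\<integral>x. g x \<partial>\<Phi>)) * (g (\<theta>s m') - (\<integral>x. g x \<partial>\<Phi>)) \<partial>PiM I (\<lambda>_. \<Phi>)) = 0"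
proof -
  interpret \<Phi>: prob_space \<Phi> by (rule assms(1))
  interpret product_prob_space "\<lambda>_. \<Phi>"
    using assms(1) by (simp add: product_prob_space_def product_prob_space_axioms_def
        product_sigma_finite_def prob_space.axioms(1) finite_measure.axioms(1))
  define h where "h i x = (if i = m \<or> i = m' then g x - (\<integral>x. g x \<partial>\<Phi>) else 1)" for i x
  have factor: "(g (\<theta>s m) - (\<integral>x. g x \<partial>\<Phi>)) * (g (\<theta>s m') - (\<integral>x. g x \<partial>\<Phi>)) = (\<Prod>i\<in>I. h i (\<theta>s i))"
    for \<theta>s
  proof -
    have "(\<Prod>i\<in>I. h i (\<theta>s i)) = (\<Prod>i\<in>{m, m'}. h i (\<theta>s i))"
      using assms by (intro prod.mono_neutral_right) (auto simp: h_def)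
    then show ?thesis
      using assms by (simp add: h_def)
  qed
  have int_h: "integrable \<Phi> (h i)" for i
    unfolding h_def using assms(6) by (cases "i = m \<or> i = m'") auto
  have "(\<integral>\<theta>s. (\<Prod>i\<in>I. h i (\<theta>s i)) \<partial>PiM I (\<lambda>_. \<Phi>)) = (\<Prod>i\<in>I. \<integral>x. h i x \<partial>\<Phi>)"
    by (rule product_integral_prod[OF assms(2) int_h])
  also have "\<dots> = 0"
    using assms(2,3,6) by (intro prod_zero bexI[of _ m]) (simp_all add: h_def \<Phi>.prob_space)
  finally show ?thesis
    unfolding factor .
qed

lemma sample_mean_sq_error_le:
  fixes g :: "'a \<Rightarrow> real" and M :: nat
  assumes P: "prob_space \<Phi>" and g: "g \<in> borel_measurable \<Phi>" "\<And>x. g x \<in> {0..1}" and M: "0 < M"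
  defines "err \<equiv> \<lambda>\<theta>s. ((\<Sum>m<M. g (\<theta>s m)) / M - (\<integral>x. g x \<partial>\<Phi>))\<^sup>2"
  shows "integrable (PiM {..<M} (\<lambda>_. \<Phi>)) err"
    and "(\<integral>\<theta>s. err \<theta>s \<partial>PiM {..<M} (\<lambda>_. \<Phi>)) \<le> 1 / M"
proof -
  interpret \<Phi>: prob_space \<Phi> by (rule P)
  interpret prob_space "PiM {..<M} (\<lambda>_. \<Phi>)"
    using P by (rule prob_space_PiM)
  define \<mu> where "\<mu> = (\<integral>x. g x \<partial>\<Phi>)"
  define Y where "Y m \<theta>s = g (\<theta>s m) - \<mu>" for m :: nat and \<theta>s :: "nat \<Rightarrow> 'a"
  have int_g: "integrable \<Phi> g"
    using g by (intro \<Phi>.integrable_const_bound[where B = 1]) auto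
  have "\<mu> \<in> {0..1}"
    unfolding \<mu>_def using g int_g \<Phi>.integral_le_const[of g 1] by (auto intro: integral_nonneg_AE)
  then have Y_bound: "\<bar>Y m \<theta>s\<bar> \<le> 1" for m \<theta>s
    unfolding Y_def using g(2)[of "\<theta>s m"] by auto
  have int_YY: "integrable (PiM {..<M} (\<lambda>_. \<Phi>)) (\<lambda>\<theta>s. Y m \<theta>s * Y m' \<theta>s)" if "m < M" "m' < M" for m m'
    using that g Y_bound by (intro integrable_const_bound[where B = 1])
      (auto simp: Y_def abs_mult intro!: mult_le_one)
  have "err \<theta>s = (\<Sum>m<M. \<Sum>m'<M. Y m \<theta>s * Y m' \<theta>s) / (real M)\<^sup>2" for \<theta>s
  proof -
    have "(\<Sum>m<M. g (\<theta>s m)) / M - \<mu> = (\<Sum>m<M. Y m \<theta>s) / M"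
      using M by (simp add: Y_def sum_subtractf field_simps)
    then show ?thesis
      unfolding err_def \<mu>_def by (simp add: power_divide power2_eq_square sum_product)
  qed
  then have err_eq: "err = (\<lambda>\<theta>s. (\<Sum>m<M. \<Sum>m'<M. Y m \<theta>s * Y m' \<theta>s) / (real M)\<^sup>2)" ..
  show "integrable (PiM {..<M} (\<lambda>_. \<Phi>)) err"
    unfolding err_eq by (auto intro!: Bochner_Integration.integrable_sum int_YY)
  have diagonal: "(\<integral>\<theta>s. Y m \<theta>s * Y m' \<theta>s \<partial>PiM {..<M} (\<lambda>_. \<Phi>))
      = (if m' = m then \<integral>\<theta>s. (Y m \<theta>s)\<^sup>2 \<partial>PiM {..<M} (\<lambda>_. \<Phi>) else 0)" if "m < M" "m' < M" for m m'
    using that integral_PiM_centered_product_eq_0[OF P, of "{..<M}" m m' g] int_g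
    by (auto simp: Y_def \<mu>_def power2_eq_square)
  have "(\<integral>\<theta>s. (\<Sum>m<M. \<Sum>m'<M. Y m \<theta>s * Y m' \<theta>s) \<partial>PiM {..<M} (\<lambda>_. \<Phi>))
      = (\<Sum>m<M. \<integral>\<theta>s. (\<Sum>m'<M. Y m \<theta>s * Y m' \<theta>s) \<partial>PiM {..<M} (\<lambda>_. \<Phi>))"
    by (rule Bochner_Integration.integral_sum) (auto intro!: Bochner_Integration.integrable_sum int_YY)
  also have "\<dots> = (\<Sum>m<M. \<Sum>m'<M. \<integral>\<theta>s. Y m \<theta>s * Y m' \<theta>s \<partial>PiM {..<M} (\<lambda>_. \<Phi>))"
    by (intro sum.cong refl Bochner_Integration.integral_sum) (auto intro: int_YY)
  finally have "(\<integral>\<theta>s. err \<theta>s \<partial>PiM {..<M} (\<lambda>_. \<Phi>))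
      = (\<Sum>m<M. \<Sum>m'<M. \<integral>\<theta>s. Y m \<theta>s * Y m' \<theta>s \<partial>PiM {..<M} (\<lambda>_. \<Phi>)) / (real M)\<^sup>2"
    unfolding err_eq by simp
  also have "\<dots> = (\<Sum>m<M. \<integral>\<theta>s. (Y m \<theta>s)\<^sup>2 \<partial>PiM {..<M} (\<lambda>_. \<Phi>)) / (real M)\<^sup>2"
    by (simp add: diagonal sum.delta)
  also have "\<dots> \<le> (\<Sum>m<M. 1) / (real M)\<^sup>2"
  proof (intro divide_right_mono sum_mono integral_le_const)
    fix m assume "m \<in> {..<M}"
    then show "integrable (PiM {..<M} (\<lambda>_. \<Phi>)) (\<lambda>\<theta>s. (Y m \<theta>s)\<^sup>2)"
      using int_YY by (simp add: power2_eq_square)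
    show "AE \<theta>s in PiM {..<M} (\<lambda>_. \<Phi>). (Y m \<theta>s)\<^sup>2 \<le> 1"
      using abs_le_square_iff[of "Y m _" 1] Y_bound by simp
  qed auto
  also have "\<dots> = 1 / M"
    by (simp add: power2_eq_square)
  finally show "(\<integral>\<theta>s. err \<theta>s \<partial>PiM {..<M} (\<lambda>_. \<Phi>)) \<le> 1 / M" .
qed

section \<open>Rank statistics of a posterior family\<close>

lemma prob_space_density_real:
  fixes g :: "'a \<Rightarrow> real"
  assumes "g \<in> borel_measurable M" "\<And>x. 0 \<le> g x" "(\<integral>x. g x \<partial>M) = 1"
  shows "prob_space (density M g)"
proof (rule prob_spaceI)
  have "integrable M g"
    using assms(3) not_integrable_integral_eq by fastforce
  then have "emeasure (density M g) (space M) = ennreal (\<integral>x. g x \<partial>M)"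
    using assms by (simp add: emeasure_density nn_integral_eq_integral)
  then show "emeasure (density M g) (space (density M g)) = 1"
    using assms(3) by simp
qed

lemma integrable_mult_bounded:
  fixes w F :: "'a \<Rightarrow> real"
  assumes "integrable M w" "F \<in> borel_measurable M" "\<And>x. \<bar>F x\<bar> \<le> B"
  shows "integrable M (\<lambda>x. w x * F x)"
proof (rule Bochner_Integration.integrable_bound)
  show "integrable M (\<lambda>x. B * w x)"
    using assms(1) by simp
  show "(\<lambda>x. w x * F x) \<in> borel_measurable M"
    using borel_measurable_integrable[OF assms(1)] assms(2) by (rule borel_measurable_times)
  have "0 \<le> B"
    using assms(3) abs_ge_zero order.trans by blast
  have "\<bar>w x\<bar> * \<bar>F x\<bar> \<le> \<bar>w x\<bar> * B" for x
    using assms(3)[of x] by (intro mult_left_mono) auto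
  then show "AE x in M. norm (w x * F x) \<le> norm (B * w x)"
    using \<open>0 \<le> B\<close> by (simp add: abs_mult mult.commute)
qed

lemma integral_weighted_le:
  fixes w F G :: "'a \<Rightarrow> real"
  assumes w: "integrable M w" "\<And>x. 0 \<le> w x" "(\<integral>x. w x \<partial>M) \<le> 1"
    and int: "integrable M (\<lambda>x. w x * F x)" "integrable M (\<lambda>x. w x * G x)"
    and le: "\<And>x. F x \<le> G x + e" and "0 \<le> e"
  shows "(\<integral>x. w x * F x \<partial>M) \<le> (\<integral>x. w x * G x \<partial>M) + e"
proof -
  have "(\<integral>x. w x * F x \<partial>M) \<le> (\<integral>x. w x * G x + e * w x \<partial>M)"
  proof (rule integral_mono)
    show "w x * F x \<le> w x * G x + e * w x" for x
      using mult_left_mono[OF le w(2)] by (simp add: algebra_simps)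
  qed (use w int in auto)
  also have "\<dots> = (\<integral>x. w x * G x \<partial>M) + e * (\<integral>x. w x \<partial>M)"
    using w int by simp
  also have "\<dots> \<le> (\<integral>x. w x * G x \<partial>M) + e"
    using w \<open>0 \<le> e\<close> mult_left_le by simp
  finally show ?thesis .
qed

locale posterior_family =
  fixes phi :: "'a::euclidean_space \<Rightarrow> 'b::euclidean_space \<Rightarrow> real" and f :: "'a \<Rightarrow> 'b \<Rightarrow> real"
  assumes phi_measurable: "(\<lambda>p. phi (fst p) (snd p)) \<in> borel_measurable borel"
    and phi_nonneg: "\<And>\<theta> y. phi \<theta> y \<ge> 0"
    and phi_integral: "\<And>y. (\<integral>\<theta>. phi \<theta> y \<partial>lborel) = 1"
    and f_measurable: "(\<lambda>p. f (fst p) (snd p)) \<in> borel_measurable borel"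
begin

abbreviation Phi :: "'b \<Rightarrow> 'a measure" where
  "Phi y \<equiv> density lborel (\<lambda>\<theta>. ennreal (phi \<theta> y))"

lemma phi_measurable_pair[measurable]: "(\<lambda>(\<theta>, y). phi \<theta> y) \<in> borel_measurable (lborel \<Otimes>\<^sub>M lborel)"
  using phi_measurable by (simp add: lborel_prod split_beta')

lemma f_measurable_pair[measurable]: "(\<lambda>(\<theta>, y). f \<theta> y) \<in> borel_measurable (lborel \<Otimes>\<^sub>M lborel)"
  using f_measurable by (simp add: lborel_prod split_beta')

lemma prob_space_Phi: "prob_space (Phi y)"
  using phi_nonneg phi_integral by (intro prob_space_density_real) auto

lemma prob_space_samples: "prob_space (samples phi M y)"
  unfolding samples_def using prob_space_Phi by (rule prob_space_PiM)

lemma measure_Phi: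
  assumes "A \<in> sets lborel"
  shows "measure (Phi y) A = (\<integral>\<theta>. indicator A \<theta> * phi \<theta> y \<partial>lborel)"
proof -
  have "measure (Phi y) A = (\<integral>\<theta>. indicator A \<theta> \<partial>Phi y)"
    by simp
  also have "\<dots> = (\<integral>\<theta>. phi \<theta> y * indicator A \<theta> \<partial>lborel)"
    using assms phi_nonneg by (subst integral_density) auto
  finally show ?thesis
    by (simp add: mult.commute)
qed

lemma C_cdf_eq_measure: "C_cdf phi f s y = measure (Phi y) {\<theta>. f \<theta> y \<le> s}"
  unfolding C_cdf_def by (subst measure_Phi) measurable

lemma D_atom_eq_measure: "D_atom phi f s y = measure (Phi y) {\<theta>. f \<theta> y = s}"
  unfolding D_atom_def by (subst measure_Phi) measurable

lemma r_cont_eq_continuous_rank_cdf: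
  "r_cont phi f x \<theta>t y = continuous_rank_cdf
      (measure (Phi y) {\<theta>. f \<theta> y < f \<theta>t y} + measure (Phi y) {\<theta>. f \<theta> y = f \<theta>t y})
      (measure (Phi y) {\<theta>. f \<theta> y = f \<theta>t y}) x"
proof -
  interpret prob_space "Phi y" by (rule prob_space_Phi)
  have "{\<theta>. f \<theta> y \<le> f \<theta>t y} = {\<theta>. f \<theta> y < f \<theta>t y} \<union> {\<theta>. f \<theta> y = f \<theta>t y}"
    by auto
  then have "measure (Phi y) {\<theta>. f \<theta> y \<le> f \<theta>t y}
      = measure (Phi y) {\<theta>. f \<theta> y < f \<theta>t y} + measure (Phi y) {\<theta>. f \<theta> y = f \<theta>t y}"
    by (simp add: finite_measure_Union disjoint_iff)
  then show ?thesis
    unfolding r_cont_def continuous_rank_cdf_def C_cdf_eq_measure D_atom_eq_measure by simp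
qed

lemma real_N_less: "real (N_less f M \<theta>t y \<theta>s) = (\<Sum>m<M. if f (\<theta>s m) y < f \<theta>t y then 1 else 0)"
  unfolding N_less_def by (simp add: sum.If_cases Int_def conj_commute)

lemma real_N_equals: "real (N_equals f M \<theta>t y \<theta>s) = (\<Sum>m<M. if f (\<theta>s m) y = f \<theta>t y then 1 else 0)"
  unfolding N_equals_def by (simp add: sum.If_cases Int_def conj_commute)

lemma R_rank_eq_integral:
  "R_rank phi f M i \<theta>t y
    = (\<integral>\<theta>s. discrete_rank_cdf (N_less f M \<theta>t y \<theta>s) (N_equals f M \<theta>t y \<theta>s) i \<partial>samples phi M y)"
  unfolding R_rank_def prob_pmf_of_set_rank_le ..

lemma discrete_rank_cdf_N_measurable[measurable]:
  "(\<lambda>(\<theta>t, \<theta>s). discrete_rank_cdf (N_less f M \<theta>t y \<theta>s) (N_equals f M \<theta>t y \<theta>s) i)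
     \<in> borel_measurable (lborel \<Otimes>\<^sub>M samples phi M y)"
  unfolding discrete_rank_cdf_def real_N_less real_N_equals samples_def by measurable

lemma R_rank_measurable[measurable]: "(\<lambda>\<theta>t. R_rank phi f M i \<theta>t y) \<in> borel_measurable lborel"
proof -
  interpret prob_space "samples phi M y" by (rule prob_space_samples)
  show ?thesis
    unfolding R_rank_eq_integral by (rule borel_measurable_lebesgue_integral) measurable
qed

lemma integrable_discrete_rank_cdf_N:
  "integrable (samples phi M y) (\<lambda>\<theta>s. discrete_rank_cdf (N_less f M \<theta>t y \<theta>s) (N_equals f M \<theta>t y \<theta>s) i)"
proof -
  interpret prob_space "samples phi M y" by (rule prob_space_samples)
  have "(\<lambda>\<theta>s. discrete_rank_cdf (N_less f M \<theta>t y \<theta>s) (N_equals f M \<theta>t y \<theta>s) i) \<in> borel_measurable (samples phi M y)"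
    unfolding discrete_rank_cdf_def real_N_less real_N_equals samples_def by measurable
  then show ?thesis
    using discrete_rank_cdf_bounds by (intro integrable_const_bound[where B = 1]) auto
qed

lemma R_rank_bounds: "0 \<le> R_rank phi f M i \<theta>t y" "R_rank phi f M i \<theta>t y \<le> 1"
proof -
  interpret prob_space "samples phi M y" by (rule prob_space_samples)
  show "0 \<le> R_rank phi f M i \<theta>t y" "R_rank phi f M i \<theta>t y \<le> 1"
    unfolding R_rank_eq_integral using discrete_rank_cdf_bounds integrable_discrete_rank_cdf_N
    by (auto intro!: integral_le_const)
qed

lemma N_frequencies_mean_sq_error_le:
  fixes M :: nat and \<theta>t :: 'a and y :: 'b
  assumes "0 < M"
  defines "a \<equiv> measure (Phi y) {\<theta>. f \<theta> y < f \<theta>t y}" and "d \<equiv> measure (Phi y) {\<theta>. f \<theta> y = f \<theta>t y}"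
  defines "err \<equiv> \<lambda>\<theta>s. (real (N_less f M \<theta>t y \<theta>s) / M - a)\<^sup>2 + (real (N_equals f M \<theta>t y \<theta>s) / M - d)\<^sup>2"
  shows "integrable (samples phi M y) err" and "(\<integral>\<theta>s. err \<theta>s \<partial>samples phi M y) \<le> 2 / M"
proof -
  have frequency: "integrable (samples phi M y) (\<lambda>\<theta>s. ((\<Sum>m<M. indicator A (\<theta>s m)) / M - measure (Phi y) A)\<^sup>2)"
    "(\<integral>\<theta>s. ((\<Sum>m<M. indicator A (\<theta>s m)) / M - measure (Phi y) A)\<^sup>2 \<partial>samples phi M y) \<le> 1 / M"
    if "A \<in> sets lborel" for A
    using sample_mean_sq_error_le[OF prob_space_Phi, where g = "indicator A" and M = M] that assms(1)
    unfolding samples_def by auto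
  have "real (N_less f M \<theta>t y \<theta>s) = (\<Sum>m<M. indicator {\<theta>. f \<theta> y < f \<theta>t y} (\<theta>s m))"
    "real (N_equals f M \<theta>t y \<theta>s) = (\<Sum>m<M. indicator {\<theta>. f \<theta> y = f \<theta>t y} (\<theta>s m))" for \<theta>s
    unfolding real_N_less real_N_equals by (rule sum.cong[OF refl], simp add: indicator_def)+
  then have less: "integrable (samples phi M y) (\<lambda>\<theta>s. (real (N_less f M \<theta>t y \<theta>s) / M - a)\<^sup>2)"
      "(\<integral>\<theta>s. (real (N_less f M \<theta>t y \<theta>s) / M - a)\<^sup>2 \<partial>samples phi M y) \<le> 1 / M"
    and equals: "integrable (samples phi M y) (\<lambda>\<theta>s. (real (N_equals f M \<theta>t y \<theta>s) / M - d)\<^sup>2)"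
      "(\<integral>\<theta>s. (real (N_equals f M \<theta>t y \<theta>s) / M - d)\<^sup>2 \<partial>samples phi M y) \<le> 1 / M"
    using frequency[of "{\<theta>. f \<theta> y < f \<theta>t y}"] frequency[of "{\<theta>. f \<theta> y = f \<theta>t y}"]
    unfolding a_def d_def by auto
  show "integrable (samples phi M y) err"
    unfolding err_def using less(1) equals(1) by auto
  show "(\<integral>\<theta>s. err \<theta>s \<partial>samples phi M y) \<le> 2 / M"
    unfolding err_def using less equals by simp
qed

lemma R_rank_approx_r_cont:
  assumes M: "0 < M" and \<eta>: "0 < \<eta>" "1 / M \<le> \<eta>"
  shows "R_rank phi f M i \<theta>t y \<le> r_cont phi f (real (i + 1) / M + 2 * \<eta>) \<theta>t y + 2 / (M * \<eta>\<^sup>2)"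
    and "r_cont phi f (real (i + 1) / M - 4 * \<eta>) \<theta>t y - 2 / (M * \<eta>\<^sup>2) \<le> R_rank phi f M i \<theta>t y"
proof -
  interpret prob_space "samples phi M y" by (rule prob_space_samples)
  define a where "a = measure (Phi y) {\<theta>. f \<theta> y < f \<theta>t y}"
  define d where "d = measure (Phi y) {\<theta>. f \<theta> y = f \<theta>t y}"
  define p where "p \<theta>s = discrete_rank_cdf (N_less f M \<theta>t y \<theta>s) (N_equals f M \<theta>t y \<theta>s) i" for \<theta>s
  define dev where "dev \<theta>s = ((real (N_less f M \<theta>t y \<theta>s) / M - a)\<^sup>2
      + (real (N_equals f M \<theta>t y \<theta>s) / M - d)\<^sup>2) / \<eta>\<^sup>2" for \<theta>s
  let ?t = "real (i + 1) / M" and ?e = "2 / (M * \<eta>\<^sup>2)"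
  have r_eq: "r_cont phi f x \<theta>t y = continuous_rank_cdf (a + d) d x" for x
    unfolding a_def d_def by (rule r_cont_eq_continuous_rank_cdf)
  have int_dev: "integrable (samples phi M y) dev"
    using N_frequencies_mean_sq_error_le(1)[OF M] unfolding dev_def a_def d_def by simp
  have "(\<integral>\<theta>s. dev \<theta>s \<partial>samples phi M y)
      = (\<integral>\<theta>s. (real (N_less f M \<theta>t y \<theta>s) / M - a)\<^sup>2 + (real (N_equals f M \<theta>t y \<theta>s) / M - d)\<^sup>2
          \<partial>samples phi M y) / \<eta>\<^sup>2"
    unfolding dev_def by (rule integral_divide_zero)
  also have "\<dots> \<le> (2 / M) / \<eta>\<^sup>2"
    using N_frequencies_mean_sq_error_le(2)[OF M] unfolding a_def d_def by (rule divide_right_mono) simp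
  finally have dev_le: "(\<integral>\<theta>s. dev \<theta>s \<partial>samples phi M y) \<le> ?e"
    by simp
  have int_p: "integrable (samples phi M y) p"
    unfolding p_def by (rule integrable_discrete_rank_cdf_N)
  have "d \<ge> 0"
    unfolding d_def by simp
  have pointwise: "p \<theta>s \<le> continuous_rank_cdf (a + d) d (?t + 2 * \<eta>) + dev \<theta>s"
    "continuous_rank_cdf (a + d) d (?t - 4 * \<eta>) - dev \<theta>s \<le> p \<theta>s" for \<theta>s
    unfolding p_def dev_def by (rule discrete_rank_cdf_approx[OF M \<open>d \<ge> 0\<close> \<eta>])+
  have "R_rank phi f M i \<theta>t y \<le> (\<integral>\<theta>s. continuous_rank_cdf (a + d) d (?t + 2 * \<eta>) + dev \<theta>s \<partial>samples phi M y)"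
    unfolding R_rank_eq_integral p_def[symmetric]
    by (intro integral_mono) (use int_p int_dev pointwise(1) in auto)
  also have "\<dots> \<le> continuous_rank_cdf (a + d) d (?t + 2 * \<eta>) + ?e"
    using int_dev dev_le by (simp add: prob_space)
  finally show "R_rank phi f M i \<theta>t y \<le> r_cont phi f (?t + 2 * \<eta>) \<theta>t y + ?e"
    unfolding r_eq .
  have "continuous_rank_cdf (a + d) d (?t - 4 * \<eta>) - ?e
      \<le> (\<integral>\<theta>s. continuous_rank_cdf (a + d) d (?t - 4 * \<eta>) - dev \<theta>s \<partial>samples phi M y)"
    using int_dev dev_le by (simp add: prob_space)
  also have "\<dots> \<le> R_rank phi f M i \<theta>t y"
    unfolding R_rank_eq_integral p_def[symmetric]
    by (intro integral_mono) (use int_p int_dev pointwise(2) in auto)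
  finally show "r_cont phi f (?t - 4 * \<eta>) \<theta>t y - ?e \<le> R_rank phi f M i \<theta>t y"
    unfolding r_eq .
qed

lemma C_cdf_measurable[measurable]: "(\<lambda>(s, y). C_cdf phi f s y) \<in> borel_measurable (lborel \<Otimes>\<^sub>M lborel)"
  unfolding C_cdf_def by measurable

lemma D_atom_measurable[measurable]: "(\<lambda>(s, y). D_atom phi f s y) \<in> borel_measurable (lborel \<Otimes>\<^sub>M lborel)"
  unfolding D_atom_def by measurable

lemma r_cont_measurable[measurable]: "(\<lambda>(\<theta>, y). r_cont phi f x \<theta> y) \<in> borel_measurable (lborel \<Otimes>\<^sub>M lborel)"
proof -
  interpret prob_space "uniform_measure lborel {0..1::real}"
    by (rule prob_space_uniform_01)
  have "r_cont phi f x \<theta> y = (\<integral>u. indicator {u. C_cdf phi f (f \<theta> y) y - u * D_atom phi f (f \<theta> y) y \<le> x} u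
      \<partial>uniform_measure lborel {0..1})" for \<theta> y
    unfolding r_cont_def by simp
  then show ?thesis
    by simp measurable
qed

lemma r_cont_bounds: "0 \<le> r_cont phi f x \<theta> y" "r_cont phi f x \<theta> y \<le> 1"
  unfolding r_cont_eq_continuous_rank_cdf by (rule continuous_rank_cdf_bounds)+

lemma r_cont_mono: "x \<le> x' \<Longrightarrow> r_cont phi f x \<theta> y \<le> r_cont phi f x' \<theta> y"
  unfolding r_cont_eq_continuous_rank_cdf by (rule continuous_rank_cdf_mono)

end

locale sbc_model = posterior_family phi f
  for phi :: "'a::euclidean_space \<Rightarrow> 'b::euclidean_space \<Rightarrow> real" and f +
  fixes prior :: "'a \<Rightarrow> real" and obs :: "'b \<Rightarrow> 'a \<Rightarrow> real"
  assumes prior_measurable[measurable]: "prior \<in> borel_measurable lborel"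
    and prior_nonneg: "\<And>\<theta>. prior \<theta> \<ge> 0"
    and prior_integral: "(\<integral>\<theta>. prior \<theta> \<partial>lborel) = 1"
    and obs_measurable: "(\<lambda>p. obs (snd p) (fst p)) \<in> borel_measurable borel"
    and obs_nonneg: "\<And>y \<theta>. obs y \<theta> \<ge> 0"
    and obs_integral: "\<And>\<theta>. (\<integral>y. obs y \<theta> \<partial>lborel) = 1"
begin

lemma obs_measurable_pair[measurable]: "(\<lambda>(y, \<theta>). obs y \<theta>) \<in> borel_measurable (lborel \<Otimes>\<^sub>M lborel)"
proof -
  have "(\<lambda>p. obs (snd p) (fst p)) \<in> borel_measurable (lborel \<Otimes>\<^sub>M lborel)"
    using obs_measurable by (simp add: lborel_prod)
  then show ?thesis
    by (subst measurable_pair_swap_iff) (simp add: split_beta')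
qed

lemma marg_measurable[measurable]: "marg prior obs \<in> borel_measurable lborel"
  unfolding marg_def[abs_def] by measurable

lemma post_measurable[measurable]: "(\<lambda>(\<theta>, y). post prior obs \<theta> y) \<in> borel_measurable (lborel \<Otimes>\<^sub>M lborel)"
  unfolding post_def by measurable

lemma q_cont_measurable[measurable]: "q_cont prior obs phi f x \<in> borel_measurable lborel"
  unfolding q_cont_def[abs_def] by measurable

lemma marg_nonneg: "0 \<le> marg prior obs y"
  unfolding marg_def using obs_nonneg prior_nonneg by simp

lemma post_nonneg: "0 \<le> post prior obs \<theta> y"
  unfolding post_def using obs_nonneg prior_nonneg marg_nonneg by simp

text \<open>Where the marginal vanishes, post is 0 (division by zero), so the posterior-weighted
  bounds below hold for every y.\<close>

lemma integrable_post: "integrable lborel (\<lambda>\<theta>. post prior obs \<theta> y)"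
proof (cases "marg prior obs y = 0")
  case False
  then have "integrable lborel (\<lambda>\<theta>. obs y \<theta> * prior \<theta>)"
    using not_integrable_integral_eq unfolding marg_def by fastforce
  then show ?thesis
    unfolding post_def by simp
qed (simp add: post_def)

lemma integral_post_le_1: "(\<integral>\<theta>. post prior obs \<theta> y \<partial>lborel) \<le> 1"
  by (cases "marg prior obs y = 0") (simp_all add: post_def marg_def)

lemma nn_integral_marg_le_1: "(\<integral>\<^sup>+y. ennreal (marg prior obs y) \<partial>lborel) \<le> 1"
proof -
  have "ennreal (marg prior obs y) \<le> (\<integral>\<^sup>+\<theta>. ennreal (obs y \<theta> * prior \<theta>) \<partial>lborel)" for y
  proof (cases "integrable lborel (\<lambda>\<theta>. obs y \<theta> * prior \<theta>)")
    case True
    then show ?thesis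
      unfolding marg_def using obs_nonneg prior_nonneg by (subst nn_integral_eq_integral) auto
  qed (simp add: marg_def not_integrable_integral_eq)
  then have "(\<integral>\<^sup>+y. ennreal (marg prior obs y) \<partial>lborel)
      \<le> (\<integral>\<^sup>+y. (\<integral>\<^sup>+\<theta>. ennreal (obs y \<theta> * prior \<theta>) \<partial>lborel) \<partial>lborel)"
    by (intro nn_integral_mono)
  also have "\<dots> = (\<integral>\<^sup>+\<theta>. (\<integral>\<^sup>+y. ennreal (obs y \<theta> * prior \<theta>) \<partial>lborel) \<partial>lborel)"
    by (rule pair_sigma_finite.Fubini') (simp_all add: pair_sigma_finite_def lborel.sigma_finite_measure_axioms)
  also have "\<dots> = (\<integral>\<^sup>+\<theta>. (\<integral>\<^sup>+y. ennreal (obs y \<theta>) * ennreal (prior \<theta>) \<partial>lborel) \<partial>lborel)"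
    using obs_nonneg prior_nonneg by (simp add: ennreal_mult)
  also have "\<dots> = (\<integral>\<^sup>+\<theta>. ennreal (prior \<theta>) \<partial>lborel)"
  proof (intro nn_integral_cong)
    fix \<theta>
    have "integrable lborel (\<lambda>y. obs y \<theta>)"
      using obs_integral[of \<theta>] not_integrable_integral_eq by fastforce
    then have "(\<integral>\<^sup>+y. ennreal (obs y \<theta>) \<partial>lborel) = 1"
      using obs_nonneg obs_integral[of \<theta>] by (subst nn_integral_eq_integral) auto
    then show "(\<integral>\<^sup>+y. ennreal (obs y \<theta>) * ennreal (prior \<theta>) \<partial>lborel) = ennreal (prior \<theta>)"
      by (simp add: nn_integral_multc)
  qed
  also have "\<dots> = 1"
  proof -
    have "integrable lborel prior"
      using prior_integral not_integrable_integral_eq by fastforce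
    then show ?thesis
      using prior_nonneg prior_integral by (subst nn_integral_eq_integral) auto
  qed
  finally show ?thesis .
qed

lemma integrable_marg: "integrable lborel (marg prior obs)"
  using nn_integral_marg_le_1 marg_nonneg
  by (intro integrableI_nonneg) (auto simp: ennreal_le_1 intro: order.strict_trans1)

lemma integral_marg_le_1: "(\<integral>y. marg prior obs y \<partial>lborel) \<le> 1"
  using nn_integral_marg_le_1 integrable_marg marg_nonneg
  by (subst (asm) nn_integral_eq_integral) auto

lemma integral_post_weighted_le:
  assumes "F \<in> borel_measurable lborel" "G \<in> borel_measurable lborel"
    and "\<And>\<theta>. \<bar>F \<theta>\<bar> \<le> 1" "\<And>\<theta>. \<bar>G \<theta>\<bar> \<le> 1" "\<And>\<theta>. F \<theta> \<le> G \<theta> + e" "0 \<le> e"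
  shows "(\<integral>\<theta>. post prior obs \<theta> y * F \<theta> \<partial>lborel) \<le> (\<integral>\<theta>. post prior obs \<theta> y * G \<theta> \<partial>lborel) + e"
  using assms integrable_post post_nonneg integral_post_le_1
  by (intro integral_weighted_le integrable_mult_bounded) auto

lemma q_cont_nonneg: "0 \<le> q_cont prior obs phi f x y"
  unfolding q_cont_def using post_nonneg r_cont_bounds by simp

lemma q_cont_le_1: "q_cont prior obs phi f x y \<le> 1"
  using integral_post_weighted_le[of "\<lambda>\<theta>. r_cont phi f x \<theta> y" "\<lambda>_. 0" 1 y] r_cont_bounds
  unfolding q_cont_def by (simp add: abs_le_iff)

lemma q_cont_mono: "x \<le> x' \<Longrightarrow> q_cont prior obs phi f x y \<le> q_cont prior obs phi f x' y"
  using integral_post_weighted_le[of "\<lambda>\<theta>. r_cont phi f x \<theta> y" "\<lambda>\<theta>. r_cont phi f x' \<theta> y" 0 y]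
    r_cont_bounds r_cont_mono
  unfolding q_cont_def by (simp add: abs_le_iff)

lemma Q_rank_approx_q_cont:
  assumes "0 < M" "0 < \<eta>" "1 / M \<le> \<eta>"
  shows "Q_rank prior obs phi f M i y \<le> q_cont prior obs phi f (real (i + 1) / M + 2 * \<eta>) y + 2 / (M * \<eta>\<^sup>2)"
    and "q_cont prior obs phi f (real (i + 1) / M - 4 * \<eta>) y - 2 / (M * \<eta>\<^sup>2) \<le> Q_rank prior obs phi f M i y"
proof -
  note bounds = R_rank_approx_r_cont[OF assms] R_rank_bounds r_cont_bounds
  show "Q_rank prior obs phi f M i y \<le> q_cont prior obs phi f (real (i + 1) / M + 2 * \<eta>) y + 2 / (M * \<eta>\<^sup>2)"
    unfolding Q_rank_def q_cont_def using bounds assms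
    by (intro integral_post_weighted_le) (auto simp: abs_le_iff)
  have "q_cont prior obs phi f (real (i + 1) / M - 4 * \<eta>) y \<le> Q_rank prior obs phi f M i y + 2 / (M * \<eta>\<^sup>2)"
    unfolding Q_rank_def q_cont_def using bounds assms
    by (intro integral_post_weighted_le) (auto simp: abs_le_iff algebra_simps)
  then show "q_cont prior obs phi f (real (i + 1) / M - 4 * \<eta>) y - 2 / (M * \<eta>\<^sup>2) \<le> Q_rank prior obs phi f M i y"
    by simp
qed

lemma q_cont_eq_self_if_Q_rank_limit:
  assumes "\<forall>\<epsilon>>0. \<exists>M0. \<forall>M\<ge>M0. \<forall>i\<le>M. \<bar>Q_rank prior obs phi f M i y - real (i + 1) / real (M + 1)\<bar> < \<epsilon>"
  shows "\<forall>x\<in>{0..1}. q_cont prior obs phi f x y = x"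
proof
  fix x :: real assume "x \<in> {0..1}"
  show "q_cont prior obs phi f x y = x"
  proof (rule identity_if_uniform_rank_limit[where Q = "\<lambda>M i. Q_rank prior obs phi f M i y"])
    show "mono (\<lambda>x. q_cont prior obs phi f x y)"
      by (intro monoI q_cont_mono)
  qed (use q_cont_nonneg q_cont_le_1 Q_rank_approx_q_cont assms \<open>x \<in> {0..1}\<close> in auto)
qed

lemma integral_marg_weighted_le:
  assumes "integrable lborel (\<lambda>y. F y * marg prior obs y)" "integrable lborel (\<lambda>y. G y * marg prior obs y)"
    and "\<And>y. F y \<le> G y + e" "0 \<le> e"
  shows "(\<integral>y. F y * marg prior obs y \<partial>lborel) \<le> (\<integral>y. G y * marg prior obs y \<partial>lborel) + e"
  using integral_weighted_le[OF integrable_marg marg_nonneg integral_marg_le_1, of F G e] assms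
  by (simp add: mult.commute)

lemma integrable_q_cont_marg: "integrable lborel (\<lambda>y. q_cont prior obs phi f x y * marg prior obs y)"
  using integrable_mult_bounded[OF integrable_marg q_cont_measurable[of x], where B = 1] q_cont_nonneg q_cont_le_1
  by (simp add: mult.commute abs_le_iff)

lemma integral_Q_rank_marg_approx:
  assumes "0 < M" "0 < \<eta>" "1 / M \<le> \<eta>"
  shows "(\<integral>y. Q_rank prior obs phi f M i y * marg prior obs y \<partial>lborel)
      \<le> (\<integral>y. q_cont prior obs phi f (real (i + 1) / M + 2 * \<eta>) y * marg prior obs y \<partial>lborel) + 2 / (M * \<eta>\<^sup>2)"
    and "0 < (\<integral>y. Q_rank prior obs phi f M i y * marg prior obs y \<partial>lborel) \<Longrightarrow>
      (\<integral>y. q_cont prior obs phi f (real (i + 1) / M - 4 * \<eta>) y * marg prior obs y \<partial>lborel) - 2 / (M * \<eta>\<^sup>2)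
      \<le> (\<integral>y. Q_rank prior obs phi f M i y * marg prior obs y \<partial>lborel)"
proof -
  show "(\<integral>y. Q_rank prior obs phi f M i y * marg prior obs y \<partial>lborel)
      \<le> (\<integral>y. q_cont prior obs phi f (real (i + 1) / M + 2 * \<eta>) y * marg prior obs y \<partial>lborel) + 2 / (M * \<eta>\<^sup>2)"
  proof (cases "integrable lborel (\<lambda>y. Q_rank prior obs phi f M i y * marg prior obs y)")
    case True
    then show ?thesis
      using assms by (intro integral_marg_weighted_le integrable_q_cont_marg Q_rank_approx_q_cont) auto
  next
    case False
    then show ?thesis
      using q_cont_nonneg marg_nonneg by (simp add: not_integrable_integral_eq)
  qed
  \<comment> \<open>Q_rank is not known to be measurable in y; a positive integral excludes the junk value 0.\<close>
  assume "0 < (\<integral>y. Q_rank prior obs phi f M i y * marg prior obs y \<partial>lborel)"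
  then have "integrable lborel (\<lambda>y. Q_rank prior obs phi f M i y * marg prior obs y)"
    using not_integrable_integral_eq by force
  then have "(\<integral>y. q_cont prior obs phi f (real (i + 1) / M - 4 * \<eta>) y * marg prior obs y \<partial>lborel)
      \<le> (\<integral>y. Q_rank prior obs phi f M i y * marg prior obs y \<partial>lborel) + 2 / (M * \<eta>\<^sup>2)"
    using assms Q_rank_approx_q_cont(2) by (intro integral_marg_weighted_le integrable_q_cont_marg) (auto simp: algebra_simps)
  then show "(\<integral>y. q_cont prior obs phi f (real (i + 1) / M - 4 * \<eta>) y * marg prior obs y \<partial>lborel) - 2 / (M * \<eta>\<^sup>2)
      \<le> (\<integral>y. Q_rank prior obs phi f M i y * marg prior obs y \<partial>lborel)"
    by simp
qed

lemma passes_continuous_SBC_if_Q_rank_limit: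
  assumes "\<forall>\<epsilon>>0. \<exists>M0. \<forall>M\<ge>M0. \<forall>i\<le>M.
      \<bar>(\<integral>y. Q_rank prior obs phi f M i y * marg prior obs y \<partial>lborel) - real (i + 1) / real (M + 1)\<bar> < \<epsilon>"
  shows "passes_continuous_SBC prior obs phi f"
  unfolding passes_continuous_SBC_def
proof
  fix x :: real assume "x \<in> {0..1}"
  let ?q = "\<lambda>x. \<integral>y. q_cont prior obs phi f x y * marg prior obs y \<partial>lborel"
  show "?q x = x"
  proof (rule identity_if_uniform_rank_limit[where Q = "\<lambda>M i. \<integral>y. Q_rank prior obs phi f M i y * marg prior obs y \<partial>lborel"])
    show "mono ?q"
      using integral_marg_weighted_le[OF integrable_q_cont_marg integrable_q_cont_marg _ order.refl] q_cont_mono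
      by (intro monoI) simp
    show "?q x \<le> 1" for x
      using integral_marg_weighted_le[OF integrable_q_cont_marg[of x], where G = "\<lambda>_. 0" and e = 1] q_cont_le_1
      by simp
  qed (use q_cont_nonneg marg_nonneg integral_Q_rank_marg_approx assms \<open>x \<in> {0..1}\<close> in auto)
qed

end

theorem theorem2:
  fixes prior :: "'a::euclidean_space \<Rightarrow> real"
    and obs :: "'b::euclidean_space \<Rightarrow> 'a \<Rightarrow> real"
    and phi :: "'a \<Rightarrow> 'b \<Rightarrow> real"
    and f :: "'a \<Rightarrow> 'b \<Rightarrow> real"
  assumes prior_meas: "prior \<in> borel_measurable lborel"
    and prior_nonneg: "\<And>\<theta>. prior \<theta> \<ge> 0"
    and prior_int: "(\<integral>\<theta>. prior \<theta> \<partial>lborel) = 1"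
    and obs_meas: "(\<lambda>p. obs (snd p) (fst p)) \<in> borel_measurable borel"
    and obs_nonneg: "\<And>y \<theta>. obs y \<theta> \<ge> 0"
    and obs_int: "\<And>\<theta>. (\<integral>y. obs y \<theta> \<partial>lborel) = 1"
    and phi_meas: "(\<lambda>p. phi (fst p) (snd p)) \<in> borel_measurable borel"
    and phi_nonneg: "\<And>\<theta> y. phi \<theta> y \<ge> 0"
    and phi_int: "\<And>y. (\<integral>\<theta>. phi \<theta> y \<partial>lborel) = 1"
    and f_meas: "(\<lambda>p. f (fst p) (snd p)) \<in> borel_measurable borel"
  shows "(\<forall>y. (\<forall>\<epsilon>>0. \<exists>M0. \<forall>M\<ge>M0. \<forall>i\<le>M.
                 \<bar>Q_rank prior obs phi f M i y - real (i + 1) / real (M + 1)\<bar> < \<epsilon>)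
              \<longrightarrow> (\<forall>x\<in>{0..1}. q_cont prior obs phi f x y = x))
       \<and> ((\<forall>\<epsilon>>0. \<exists>M0. \<forall>M\<ge>M0. \<forall>i\<le>M.
             \<bar>(\<integral>y. Q_rank prior obs phi f M i y * marg prior obs y \<partial>lborel)
                - real (i + 1) / real (M + 1)\<bar> < \<epsilon>)
          \<longrightarrow> passes_continuous_SBC prior obs phi f)"
proof -
  interpret sbc_model phi f prior obs
    by unfold_locales (fact assms)+
  show ?thesis
    using q_cont_eq_self_if_Q_rank_limit passes_continuous_SBC_if_Q_rank_limit by blast
qed

end
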